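(* If $(X,\asymp,B)$ is a prelength space, then $(\mathfrak{C}(X),\asymp,B')$ is a prelength space.
   Context: $\mathbb{Q}^+$ denotes the strictly positive rationals; all $\varepsilon,\delta$ (with indices) range over $\mathbb{Q}^+$. A metric space is a triple $(X,\asymp,B)$ where $\asymp$ is an equivalence relation on $X$ and $B$ assigns to each $\varepsilon\in\mathbb{Q}^+$ a binary relation $B_\varepsilon$ on $X$ respecting $\asymp$, such that: (1) each $B_\varepsilon$ is reflexive; (2) each $B_\varepsilon$ is symmetric; (3) if $B_{\varepsilon_1}(a,b)$ and $B_{\varepsilon_2}(b,c)$ then $B_{\varepsilon_1+\varepsilon_2}(a,c)$; (4) if $B_{\varepsilon+\delta}(a,b)$ for all $\delta$, then $B_\varepsilon(a,b)$; (5) if $B_\varepsilon(a,b)$ for all $\varepsilon$, then $a\asymp b$. A prelength space is a metric space such that for all $a,b,\varepsilon,\delta_1,\delta_2$ with $\varepsilon<\delta_1+\delta_2$ and $B_\varepsilon(a,b)$ there exists $c$ with $B_{\delta_1}(a,c)$ and $B_{\delta_2}(c,b)$. A regular function over $X$ is a function $x:\mathbb{Q}^+\to X$ such that $B_{\varepsilon_1+\varepsilon_2}(x(\varepsilon_1),x(\varepsilon_2))$ for all $\varepsilon_1,\varepsilon_2$. $\mathfrak{C}(X)$ is the set of regular functions over $X$; on it, $x\asymp y$ means $B_{2\varepsilon}(x(\varepsilon),y(\varepsilon))$ for all $\varepsilon$, and $B'_\varepsilon(x,y)$ means $B_{\varepsilon+\delta_1+\delta_2}(x(\delta_1),y(\delta_2))$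 for all $\delta_1,\delta_2$. *)

theory Defs
  imports Complex_Main
begin

text \<open>A metric space (X, eq, B) in the sense of the paper: X is a carrier set,
  eq an equivalence relation on X, and B e a binary relation on X for each
  strictly positive rational e (values of B at non-positive e are irrelevant).\<close>

definition metric_space_Q :: "'a set \<Rightarrow> ('a \<Rightarrow> 'a \<Rightarrow> bool) \<Rightarrow> (rat \<Rightarrow> 'a \<Rightarrow> 'a \<Rightarrow> bool) \<Rightarrow> bool" where
  "metric_space_Q X eq B \<longleftrightarrow>
     (\<forall>a\<in>X. eq a a) \<and>
     (\<forall>a\<in>X. \<forall>b\<in>X. eq a b \<longrightarrow> eq b a) \<and>
     (\<forall>a\<in>X. \<forall>b\<in>X. \<forall>c\<in>X. eq a b \<longrightarrow> eq b c \<longrightarrow> eq a c) \<and>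
     (\<forall>e>0. \<forall>a\<in>X. \<forall>a'\<in>X. \<forall>b\<in>X. \<forall>b'\<in>X.
        eq a a' \<longrightarrow> eq b b' \<longrightarrow> B e a b \<longrightarrow> B e a' b') \<and>
     (\<forall>e>0. \<forall>a\<in>X. B e a a) \<and>
     (\<forall>e>0. \<forall>a\<in>X. \<forall>b\<in>X. B e a b \<longrightarrow> B e b a) \<and>
     (\<forall>e1>0. \<forall>e2>0. \<forall>a\<in>X. \<forall>b\<in>X. \<forall>c\<in>X.
        B e1 a b \<longrightarrow> B e2 b c \<longrightarrow> B (e1 + e2) a c) \<and>
     (\<forall>e>0. \<forall>a\<in>X. \<forall>b\<in>X. (\<forall>d>0. B (e + d) a b) \<longrightarrow> B e a b) \<and>
     (\<forall>a\<in>X. \<forall>b\<in>X. (\<forall>e>0. B e a b) \<longrightarrow> eq a b)"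

definition prelength_space_Q :: "'a set \<Rightarrow> ('a \<Rightarrow> 'a \<Rightarrow> bool) \<Rightarrow> (rat \<Rightarrow> 'a \<Rightarrow> 'a \<Rightarrow> bool) \<Rightarrow> bool" where
  "prelength_space_Q X eq B \<longleftrightarrow> metric_space_Q X eq B \<and>
     (\<forall>a\<in>X. \<forall>b\<in>X. \<forall>e>0. \<forall>d1>0. \<forall>d2>0.
        e < d1 + d2 \<longrightarrow> B e a b \<longrightarrow> (\<exists>c\<in>X. B d1 a c \<and> B d2 c b))"

text \<open>Regular functions Q+ -> X (only values at positive arguments matter).\<close>

definition regular_fun :: "'a set \<Rightarrow> (rat \<Rightarrow> 'a \<Rightarrow> 'a \<Rightarrow> bool) \<Rightarrow> (rat \<Rightarrow> 'a) \<Rightarrow> bool" where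
  "regular_fun X B x \<longleftrightarrow> (\<forall>e>0. x e \<in> X) \<and>
     (\<forall>e1>0. \<forall>e2>0. B (e1 + e2) (x e1) (x e2))"

definition completion :: "'a set \<Rightarrow> (rat \<Rightarrow> 'a \<Rightarrow> 'a \<Rightarrow> bool) \<Rightarrow> (rat \<Rightarrow> 'a) set" where
  "completion X B = {x. regular_fun X B x}"

definition completion_eq :: "(rat \<Rightarrow> 'a \<Rightarrow> 'a \<Rightarrow> bool) \<Rightarrow> (rat \<Rightarrow> 'a) \<Rightarrow> (rat \<Rightarrow> 'a) \<Rightarrow> bool" where
  "completion_eq B x y \<longleftrightarrow> (\<forall>e>0. B (2 * e) (x e) (y e))"

definition completion_ball :: "(rat \<Rightarrow> 'a \<Rightarrow> 'a \<Rightarrow> bool) \<Rightarrow> rat \<Rightarrow> (rat \<Rightarrow> 'a) \<Rightarrow> (rat \<Rightarrow> 'a) \<Rightarrow> bool" where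
  "completion_ball B e x y \<longleftrightarrow> (\<forall>d1>0. \<forall>d2>0. B (e + d1 + d2) (x d1) (y d2))"

end

theory Submission
  imports Defs
begin

text \<open>Two regular functions are equivalent exactly when they are at every positive distance,
  so all axioms of the completion reduce to the triangle inequality and closedness of balls in
  X, applied to the approximants at small parameters. For the prelength property, given
  B'_e(x, y) and e < d1 + d2, split the ball around the approximants x(w), y(w) in X for a
  small w; the constant regular function at the splitting point is the required midpoint, and
  the error 4w is absorbed by the slack d1 + d2 - e.\<close>

locale rat_metric =
  fixes X :: "'a set" and eq :: "'a \<Rightarrow> 'a \<Rightarrow> bool" and B :: "rat \<Rightarrow> 'a \<Rightarrow> 'a \<Rightarrow> bool"
  assumes metric: "metric_space_Q X eq B"
begin

lemma ball_refl: "e > 0 \<Longrightarrow> a \<in> X \<Longrightarrow> B e a a"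
  using metric unfolding metric_space_Q_def by blast

lemma ball_sym: "e > 0 \<Longrightarrow> a \<in> X \<Longrightarrow> b \<in> X \<Longrightarrow> B e a b \<Longrightarrow> B e b a"
  using metric unfolding metric_space_Q_def by blast

lemma ball_trans:
  "e1 > 0 \<Longrightarrow> e2 > 0 \<Longrightarrow> a \<in> X \<Longrightarrow> b \<in> X \<Longrightarrow> c \<in> X \<Longrightarrow> B e1 a b \<Longrightarrow> B e2 b c
    \<Longrightarrow> B (e1 + e2) a c"
  using metric unfolding metric_space_Q_def by blast

lemma ball_closed: "e > 0 \<Longrightarrow> a \<in> X \<Longrightarrow> b \<in> X \<Longrightarrow> (\<And>d. d > 0 \<Longrightarrow> B (e + d) a b) \<Longrightarrow> B e a b"
  using metric unfolding metric_space_Q_def by blast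

lemma ball_mono:
  assumes "e > 0" "e \<le> e'" "a \<in> X" "b \<in> X" "B e a b"
  shows "B e' a b"
proof (rule ball_closed)
  fix d :: rat assume "d > 0"
  have "B (e + (e' - e + d)) a b"
    using assms \<open>d > 0\<close> by (rule_tac ball_trans[where b = b]) (auto intro: ball_refl)
  then show "B (e' + d) a b" by simp
qed (use assms in auto)

lemma ball_closed_linear:
  assumes "e > 0" "k > 0" "a \<in> X" "b \<in> X" and close: "\<And>t. t > 0 \<Longrightarrow> B (e + k * t) a b"
  shows "B e a b"
proof (rule ball_closed)
  fix d :: rat assume "d > 0"
  with close[of "d / k"] \<open>k > 0\<close> show "B (e + d) a b" by simp
qed (use assms in auto)

lemma regular_in: "regular_fun X B x \<Longrightarrow> e > 0 \<Longrightarrow> x e \<in> X"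
  unfolding regular_fun_def by blast

lemma regular_ball: "regular_fun X B x \<Longrightarrow> e1 > 0 \<Longrightarrow> e2 > 0 \<Longrightarrow> B (e1 + e2) (x e1) (x e2)"
  unfolding regular_fun_def by blast

lemma regular_const: "c \<in> X \<Longrightarrow> regular_fun X B (\<lambda>_. c)"
  unfolding regular_fun_def by (simp add: ball_refl)

lemma completion_ball_refl:
  assumes x: "regular_fun X B x" and "e > 0"
  shows "completion_ball B e x x"
  unfolding completion_ball_def
proof (intro allI impI)
  fix a b :: rat assume "a > 0" "b > 0"
  with assms show "B (e + a + b) (x a) (x b)"
    by (rule_tac ball_mono[of "a + b"]) (auto intro: regular_ball[OF x] regular_in[OF x])
qed

lemma completion_ball_sym:
  assumes x: "regular_fun X B x" and y: "regular_fun X B y"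
    and "e > 0" "completion_ball B e x y"
  shows "completion_ball B e y x"
  unfolding completion_ball_def
proof (intro allI impI)
  fix a b :: rat assume "a > 0" "b > 0"
  then have "B (e + b + a) (x b) (y a)"
    using assms(4) unfolding completion_ball_def by blast
  then show "B (e + a + b) (y a) (x b)"
    using ball_sym \<open>e > 0\<close> \<open>a > 0\<close> \<open>b > 0\<close> regular_in x y by (simp add: ac_simps)
qed

lemma completion_ball_trans:
  assumes x: "regular_fun X B x" and y: "regular_fun X B y" and z: "regular_fun X B z"
    and "e1 > 0" "e2 > 0" "completion_ball B e1 x y" "completion_ball B e2 y z"
  shows "completion_ball B (e1 + e2) x z"
  unfolding completion_ball_def
proof (intro allI impI)
  fix a b :: rat assume "a > 0" "b > 0"
  show "B (e1 + e2 + a + b) (x a) (z b)"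
  proof (rule ball_closed_linear[where k = 2])
    fix t :: rat assume "t > 0"
    have "B ((e1 + a + t) + (e2 + t + b)) (x a) (z b)"
      using assms \<open>a > 0\<close> \<open>b > 0\<close> \<open>t > 0\<close> regular_in x y z
      by (rule_tac ball_trans[where b = "y t"]) (auto simp: completion_ball_def)
    then show "B (e1 + e2 + a + b + 2 * t) (x a) (z b)" by (simp add: algebra_simps)
  qed (use assms \<open>a > 0\<close> \<open>b > 0\<close> regular_in x z in auto)
qed

lemma completion_ball_closed:
  assumes x: "regular_fun X B x" and y: "regular_fun X B y"
    and "e > 0" "\<And>d. d > 0 \<Longrightarrow> completion_ball B (e + d) x y"
  shows "completion_ball B e x y"
  unfolding completion_ball_def
proof (intro allI impI)
  fix a b :: rat assume "a > 0" "b > 0"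
  show "B (e + a + b) (x a) (y b)"
  proof (rule ball_closed)
    fix d :: rat assume "d > 0"
    then have "B (e + d + a + b) (x a) (y b)"
      using assms(4) \<open>a > 0\<close> \<open>b > 0\<close> unfolding completion_ball_def by blast
    then show "B (e + a + b + d) (x a) (y b)" by (simp add: ac_simps)
  qed (use \<open>e > 0\<close> \<open>a > 0\<close> \<open>b > 0\<close> regular_in x y in auto)
qed

lemma completion_eq_iff_ball:
  assumes x: "regular_fun X B x" and y: "regular_fun X B y"
  shows "completion_eq B x y \<longleftrightarrow> (\<forall>e>0. completion_ball B e x y)"
proof
  assume equiv: "completion_eq B x y"
  show "\<forall>e>0. completion_ball B e x y"
    unfolding completion_ball_def
  proof (intro allI impI)
    fix e a b :: rat assume "e > 0" "a > 0" "b > 0"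
    define t where "t = e / 4"
    have "t > 0" using \<open>e > 0\<close> by (simp add: t_def)
    have "B ((a + t) + 2 * t) (x a) (y t)"
      using equiv \<open>a > 0\<close> \<open>t > 0\<close> regular_in x y regular_ball[OF x]
      by (rule_tac ball_trans[where b = "x t"]) (auto simp: completion_eq_def)
    then have "B ((a + t + 2 * t) + (t + b)) (x a) (y b)"
      using \<open>a > 0\<close> \<open>b > 0\<close> \<open>t > 0\<close> regular_in x y regular_ball[OF y]
      by (rule_tac ball_trans[where b = "y t"]) auto
    then show "B (e + a + b) (x a) (y b)" by (simp add: t_def algebra_simps)
  qed
next
  assume close: "\<forall>e>0. completion_ball B e x y"
  show "completion_eq B x y"
    unfolding completion_eq_def
  proof (intro allI impI)
    fix e :: rat assume "e > 0"
    show "B (2 * e) (x e) (y e)"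
    proof (rule ball_closed)
      fix d :: rat assume "d > 0"
      then have "B (d + e + e) (x e) (y e)"
        using close \<open>e > 0\<close> unfolding completion_ball_def by blast
      then show "B (2 * e + d) (x e) (y e)" by (simp add: algebra_simps)
    qed (use \<open>e > 0\<close> regular_in x y in auto)
  qed
qed

lemma completion_eq_refl: "regular_fun X B x \<Longrightarrow> completion_eq B x x"
  using completion_eq_iff_ball completion_ball_refl by blast

lemma completion_eq_sym:
  "regular_fun X B x \<Longrightarrow> regular_fun X B y \<Longrightarrow> completion_eq B x y \<Longrightarrow> completion_eq B y x"
  using completion_eq_iff_ball completion_ball_sym by blast

lemma completion_eq_trans:
  assumes x: "regular_fun X B x" and y: "regular_fun X B y" and z: "regular_fun X B z"
    and "completion_eq B x y" "completion_eq B y z"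
  shows "completion_eq B x z"
proof -
  have "completion_ball B (e / 2 + e / 2) x z" if "e > 0" for e :: rat
    using that assms completion_eq_iff_ball completion_ball_trans[OF x y z] by (meson half_gt_zero)
  then show ?thesis using completion_eq_iff_ball[OF x z] by simp
qed

lemma completion_ball_cong:
  assumes x: "regular_fun X B x" and y: "regular_fun X B y"
    and x': "regular_fun X B x'" and y': "regular_fun X B y'"
    and "completion_eq B x x'" "completion_eq B y y'" "e > 0" "completion_ball B e x y"
  shows "completion_ball B e x' y'"
proof (rule completion_ball_closed[OF x' y' \<open>e > 0\<close>])
  fix d :: rat assume "d > 0"
  then have "completion_ball B (d / 2) x' x" "completion_ball B (d / 2) y y'"
    using assms completion_eq_iff_ball completion_ball_sym by (auto simp del: half_gt_zero_iff)
  with assms \<open>d > 0\<close> have "completion_ball B (d / 2 + e + d / 2) x' y'"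
    by (meson completion_ball_trans add_pos_pos half_gt_zero)
  then show "completion_ball B (e + d) x' y'" by (simp add: algebra_simps)
qed

lemma completion_metric_space:
  "metric_space_Q (completion X B) (completion_eq B) (completion_ball B)"
  unfolding metric_space_Q_def completion_def Ball_def mem_Collect_eq
  apply (intro conjI ballI allI impI)
  subgoal by (rule completion_eq_refl)
  subgoal by (rule completion_eq_sym)
  subgoal by (rule completion_eq_trans)
  subgoal by (rule completion_ball_cong)
  subgoal by (rule completion_ball_refl)
  subgoal by (rule completion_ball_sym)
  subgoal by (rule completion_ball_trans)
  subgoal by (rule completion_ball_closed) auto
  subgoal by (rule completion_eq_iff_ball[THEN iffD2])
  done

lemma completion_ball_const:
  assumes x: "regular_fun X B x" and "c \<in> X" "w > 0" "e > 0" "B e (x w) c"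
  shows "completion_ball B (e + w) x (\<lambda>_. c)"
  unfolding completion_ball_def
proof (intro allI impI)
  fix a b :: rat assume "a > 0" "b > 0"
  have "B ((a + w) + e) (x a) c"
    using assms \<open>a > 0\<close> regular_in[OF x] regular_ball[OF x]
    by (rule_tac ball_trans[where b = "x w"]) auto
  then show "B (e + w + a + b) (x a) c"
    using assms \<open>a > 0\<close> \<open>b > 0\<close> regular_in[OF x]
    by (rule_tac ball_mono[of "a + w + e"]) auto
qed

end

locale rat_prelength =
  fixes X :: "'a set" and eq :: "'a \<Rightarrow> 'a \<Rightarrow> bool" and B :: "rat \<Rightarrow> 'a \<Rightarrow> 'a \<Rightarrow> bool"
  assumes prelength: "prelength_space_Q X eq B"

sublocale rat_prelength \<subseteq> rat_metric
  using prelength unfolding prelength_space_Q_def by unfold_locales blast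

context rat_prelength
begin

lemma ball_split:
  "a \<in> X \<Longrightarrow> b \<in> X \<Longrightarrow> e > 0 \<Longrightarrow> d1 > 0 \<Longrightarrow> d2 > 0 \<Longrightarrow> e < d1 + d2 \<Longrightarrow> B e a b
    \<Longrightarrow> \<exists>c\<in>X. B d1 a c \<and> B d2 c b"
  using prelength unfolding prelength_space_Q_def by blast

lemma completion_ball_split:
  assumes "x \<in> completion X B" "y \<in> completion X B"
    and "e > 0" "d1 > 0" "d2 > 0" "e < d1 + d2" "completion_ball B e x y"
  shows "\<exists>z\<in>completion X B. completion_ball B d1 x z \<and> completion_ball B d2 z y"
proof -
  have x: "regular_fun X B x" and y: "regular_fun X B y"
    using assms(1,2) unfolding completion_def by auto
  obtain w :: rat where "w > 0" "4 * w < d1 + d2 - e" "w < d1" "w < d2"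
    using assms by (intro that[of "min (d1 + d2 - e) (min d1 d2) / 5"]) (auto simp: min_def)
  have "B (e + w + w) (x w) (y w)"
    using assms(7) \<open>w > 0\<close> unfolding completion_ball_def by blast
  then obtain c where "c \<in> X" and c1: "B (d1 - w) (x w) c" and c2: "B (d2 - w) c (y w)"
    using ball_split[of "x w" "y w" "e + w + w" "d1 - w" "d2 - w"] assms \<open>w > 0\<close>
      \<open>4 * w < d1 + d2 - e\<close> \<open>w < d1\<close> \<open>w < d2\<close> regular_in x y
    by auto
  have c2': "B (d2 - w) (y w) c"
    using ball_sym c2 \<open>c \<in> X\<close> \<open>w > 0\<close> \<open>w < d2\<close> regular_in[OF y] by simp
  have "completion_ball B (d1 - w + w) x (\<lambda>_. c)"
    using completion_ball_const[OF x \<open>c \<in> X\<close> \<open>w > 0\<close> _ c1] \<open>w < d1\<close> by simp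
  moreover have "completion_ball B (d2 - w + w) y (\<lambda>_. c)"
    using completion_ball_const[OF y \<open>c \<in> X\<close> \<open>w > 0\<close> _ c2'] \<open>w < d2\<close> by simp
  ultimately show ?thesis
    using completion_ball_sym[OF y regular_const] regular_const \<open>c \<in> X\<close> assms(5)
    unfolding completion_def by auto
qed

end

theorem theorem9:
  fixes X :: "'a set" and eq :: "'a \<Rightarrow> 'a \<Rightarrow> bool" and B :: "rat \<Rightarrow> 'a \<Rightarrow> 'a \<Rightarrow> bool"
  assumes "prelength_space_Q X eq B"
  shows "prelength_space_Q (completion X B) (completion_eq B) (completion_ball B)"
proof -
  interpret rat_prelength X eq B using assms by (rule rat_prelength.intro)
  show ?thesis
    unfolding prelength_space_Q_def
    using completion_metric_space completion_ball_split by blast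
qed

end
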